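(* For $v\in\mathbb{C}$, $w\in\mathbb{C}\setminus\{1\}$ and integers $r\geq0$ define \begin{align*} U_r(w;v)&=\delta_{r,0}-\sum_{m=0}^{r}(-1)^m\binom{v}{r-m}\sum_{k=0}^{m}\frac{w}{(w-1)^{r+k+1}}\frac{(r+k)!}{k!}\mathcal{A}_{m,k}\!\left(\tfrac12,\tfrac13,\tfrac14,\dots\right),\\ \tilde U_r(w;v)&=-\sum_{m=0}^{r}\frac{v^{r-m}}{(r-m)!}\sum_{k=0}^{m}\frac{(-w)^k}{(w-1)^{r+k+1}}\frac{(r+k)!}{k!}\mathcal{A}_{m,k}\!\left(\tfrac1{2!},\tfrac1{3!},\tfrac1{4!},\dots\right). \end{align*} Then $U_0(w;v)=\tilde U_0(w;v)$ and $U_r(w;v)=\tilde U_r(w;v)+v\,\tilde U_{r-1}(w;v)$ for $r\geq1$.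
   Context: De Moivre polynomial $\mathcal{A}_{n,k}(a_1,a_2,\dots)$: coefficient of $x^n$ in $(a_1x+a_2x^2+\cdots)^k$ (so $\mathcal{A}_{0,0}=1$, $\mathcal{A}_{n,k}=0$ for $n<k$). $\binom{v}{j}=v(v-1)\cdots(v-j+1)/j!$; $\delta_{r,0}$ Kronecker delta. *)

theory Defs
  imports Complex_Main "HOL-Computational_Algebra.Formal_Power_Series"
begin

text \<open>De Moivre polynomial: coefficient of x^n in (a_1 x + a_2 x^2 + ...)^k,
  where the sequence a_1, a_2, ... is given as a function a with a j = a_j (j >= 1);
  the value a 0 is ignored.\<close>
definition demoivre :: "(nat \<Rightarrow> 'a::comm_ring_1) \<Rightarrow> nat \<Rightarrow> nat \<Rightarrow> 'a" where
  "demoivre a n k = fps_nth (Abs_fps (\<lambda>j. if j = 0 then 0 else a j) ^ k) n"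

definition U :: "nat \<Rightarrow> complex \<Rightarrow> complex \<Rightarrow> complex" where
  "U r w v = (if r = 0 then 1 else 0) -
     (\<Sum>m=0..r. (-1)^m * (v gchoose (r - m)) *
        (\<Sum>k=0..m. w / (w - 1)^(r + k + 1) * (fact (r + k) / fact k) *
           demoivre (\<lambda>j. 1 / of_nat (j + 1)) m k))"

definition U_tilde :: "nat \<Rightarrow> complex \<Rightarrow> complex \<Rightarrow> complex" where
  "U_tilde r w v = -
     (\<Sum>m=0..r. v^(r - m) / fact (r - m) *
        (\<Sum>k=0..m. (-w)^k / (w - 1)^(r + k + 1) * (fact (r + k) / fact k) *
           demoivre (\<lambda>j. 1 / fact (j + 1)) m k))"

end

theory Submission
  imports Defs
begin

text \<open>
  Both sides are coefficient extractions. The de Moivre polynomials are coefficients of powers of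
  a power series Y, so the inner sums over k are coefficients of r! / (a - b Y)^(r+1). This gives
  tilde U_r = - r! [t^r] e^(v t) D(t)^(-(r+1)) with D(t) = w (e^t - 1) / t - 1, and
  U_r = delta_r0 - w r! [x^r] (1 + x)^v (w - ln (1 + x) / x)^(-(r+1)).
  Substituting x = e^t - 1 in the formal residue [x^r] H = res H(x) / x^(r+1) turns the latter
  into delta_r0 - w r! [t^r] e^(v t) e^t D(t)^(-(r+1)). Finally w e^t = 1 + (t D(t))', and
  integrating the term containing (t D(t))' by parts inside [t^r] produces the recurrence.
\<close>

unbundle fps_syntax

lemma sum_fact_div_fact_power_nth:
  fixes Y :: "'a::field_char_0 fps"
  assumes Y0: "Y $ 0 = 0"
  shows "(\<Sum>k=0..m. fact (r + k) / fact k * (Y ^ k) $ m)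
       = fact r * inverse ((1 - Y) ^ (r + 1)) $ m"
proof -
  define S :: "'a fps" where "S = Abs_fps (\<lambda>k. of_nat ((r + k) choose k))"
  have S_eq: "inverse ((1 - fps_X) ^ (r + 1)) = S"
    using one_minus_const_fps_X_neg_power'[of "r + 1" "1::'a"] by (simp add: S_def)
  have "S oo Y = inverse ((1 - fps_X) ^ (r + 1) oo Y)"
    unfolding S_eq[symmetric] by (rule fps_inverse_compose[OF Y0]) simp
  also have "\<dots> = inverse ((1 - Y) ^ (r + 1))"
    by (simp only: fps_compose_power[OF Y0, symmetric] fps_compose_sub_distrib fps_compose_1
        fps_X_fps_compose_startby0[OF Y0])
  finally have "inverse ((1 - Y) ^ (r + 1)) $ m = (S oo Y) $ m"
    by simp
  then show ?thesis
    by (simp add: fps_compose_nth S_def binomial_fact sum_distrib_left mult.assoc)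
qed

lemma sum_scaled_fact_div_fact_power_nth:
  fixes Y :: "'a::field_char_0 fps"
  assumes Y0: "Y $ 0 = 0" and a: "a \<noteq> 0"
  shows "(\<Sum>k=0..m. b ^ k / a ^ (r + k + 1) * (fact (r + k) / fact k) * (Y ^ k) $ m)
       = fact r * inverse ((fps_const a - fps_const b * Y) ^ (r + 1)) $ m"
proof -
  define Z where "Z = fps_const (b / a) * Y"
  have Z0: "Z $ 0 = 0"
    using Y0 by (simp add: Z_def)
  have "fps_const a * Z = fps_const b * Y"
    using a by (simp add: Z_def flip: mult.assoc)
  then have "fps_const a - fps_const b * Y = fps_const a * (1 - Z)"
    by (simp add: algebra_simps)
  then have inverse_eq: "inverse ((fps_const a - fps_const b * Y) ^ (r + 1))
      = fps_const (1 / a ^ (r + 1)) * inverse ((1 - Z) ^ (r + 1))"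
    by (simp add: power_mult_distrib fps_inverse_mult fps_const_inverse fps_inverse_power
        divide_inverse power_inverse)
  have "b ^ k / a ^ (r + k + 1) * (fact (r + k) / fact k) * (Y ^ k) $ m
      = 1 / a ^ (r + 1) * (fact (r + k) / fact k * (Z ^ k) $ m)" for k
    using a by (simp add: Z_def power_mult_distrib power_add power_divide field_simps)
  then have "(\<Sum>k=0..m. b ^ k / a ^ (r + k + 1) * (fact (r + k) / fact k) * (Y ^ k) $ m)
      = 1 / a ^ (r + 1) * (\<Sum>k=0..m. fact (r + k) / fact k * (Z ^ k) $ m)"
    by (simp add: sum_distrib_left)
  also have "\<dots> = 1 / a ^ (r + 1) * (fact r * inverse ((1 - Z) ^ (r + 1)) $ m)"
    by (simp only: sum_fact_div_fact_power_nth[OF Z0])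
  finally show ?thesis
    unfolding inverse_eq by simp
qed

text \<open>A derivative has no residue: for s > 0 the coefficient below is the residue of
  the derivative of -(X u)^(-s) / s.\<close>

lemma fps_nth_deriv_mult_inverse_power:
  fixes u :: "'a::field_char_0 fps"
  assumes u0: "u $ 0 \<noteq> 0"
  shows "(fps_deriv (fps_X * u) * inverse u ^ (s + 1)) $ s = (if s = 0 then 1 else 0)"
proof (cases s)
  case 0
  then show ?thesis
    using u0 by (simp add: fps_deriv_mult)
next
  case (Suc t)
  define W where "W = inverse u"
  have uW: "u * W = 1"
    using u0 by (simp add: W_def inverse_mult_eq_1')
  have W_deriv: "fps_deriv W = - fps_deriv u * W ^ 2"
    unfolding W_def by (rule fps_inverse_deriv[OF u0])
  have "fps_deriv (fps_X * u) * W ^ (s + 1)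
      = (u * W) * W ^ s + fps_X * (fps_deriv u * W ^ 2) * W ^ t"
    using Suc by (simp add: fps_deriv_mult algebra_simps power2_eq_square)
  also have "\<dots> = W ^ (t + 1) - fps_X * (fps_deriv W * W ^ t)"
    using Suc by (simp add: uW W_deriv)
  finally have "(fps_deriv (fps_X * u) * W ^ (s + 1)) $ s
      = W ^ (t + 1) $ (t + 1) - (fps_deriv W * W ^ t) $ t"
    using Suc by simp
  moreover have "(fps_deriv W * W ^ t) $ t = W ^ (t + 1) $ (t + 1)"
  proof -
    have "fps_deriv (W ^ (t + 1)) = fps_const (of_nat (t + 1)) * (fps_deriv W * W ^ t)"
      unfolding fps_deriv_power by (simp add: mult.assoc)
    then have "of_nat (t + 1) * (fps_deriv W * W ^ t) $ t = of_nat (t + 1) * W ^ (t + 1) $ (t + 1)"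
      by (metis fps_deriv_nth fps_mult_left_const_nth)
    moreover have "(of_nat (t + 1) :: 'a) \<noteq> 0"
      by (simp only: of_nat_eq_0_iff)
    ultimately show ?thesis
      by simp
  qed
  ultimately show ?thesis
    using Suc unfolding W_def[symmetric] by simp
qed

lemma fps_nth_power_deriv_mult_inverse_power:
  fixes u :: "'a::field_char_0 fps"
  assumes u0: "u $ 0 \<noteq> 0" and "n \<le> r"
  shows "((fps_X * u) ^ n * fps_deriv (fps_X * u) * inverse u ^ (r + 1)) $ r
       = (if n = r then 1 else 0)"
proof -
  obtain s where r: "r = n + s"
    using \<open>n \<le> r\<close> le_Suc_ex by blast
  have "(fps_X * u) ^ n * fps_deriv (fps_X * u) * inverse u ^ (r + 1)
      = fps_X ^ n * ((u * inverse u) ^ n * (fps_deriv (fps_X * u) * inverse u ^ (s + 1)))"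
    unfolding r power_mult_distrib power_add by (simp only: mult_ac)
  also have "\<dots> = fps_X ^ n * (fps_deriv (fps_X * u) * inverse u ^ (s + 1))"
    using u0 by (simp add: inverse_mult_eq_1')
  finally have product_eq: "(fps_X * u) ^ n * fps_deriv (fps_X * u) * inverse u ^ (r + 1)
      = fps_X ^ n * (fps_deriv (fps_X * u) * inverse u ^ (s + 1))" .
  show ?thesis
    unfolding product_eq
    using fps_nth_deriv_mult_inverse_power[OF u0, of s] r by (simp add: fps_X_power_mult_nth)
qed

text \<open>The substitution x = X u in the formal residue of H(x) / x^(r+1).\<close>

lemma fps_nth_change_of_variables:
  fixes H u :: "'a::field_char_0 fps"
  assumes u0: "u $ 0 \<noteq> 0"
  shows "H $ r = ((H oo (fps_X * u)) * fps_deriv (fps_X * u) * inverse u ^ (r + 1)) $ r"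
proof -
  define \<phi> where "\<phi> = fps_X * u"
  define G where "G = fps_deriv \<phi> * inverse u ^ (r + 1)"
  define T where "T = fps_shift (r + 1) H"
  have \<phi>0: "\<phi> $ 0 = 0"
    by (simp add: \<phi>_def)
  have "H = (\<Sum>n\<le>r. fps_const (H $ n) * fps_X ^ n) + fps_X ^ (r + 1) * T"
    unfolding T_def
    by (rule fps_ext)
      (simp add: fps_sum_nth fps_X_power_mult_nth of_bool_def[symmetric] del: power_Suc)
  then have "H oo \<phi> = ((\<Sum>n\<le>r. fps_const (H $ n) * fps_X ^ n) + fps_X ^ (r + 1) * T) oo \<phi>"
    by (rule arg_cong)
  also have "\<dots> = (\<Sum>n\<le>r. fps_const (H $ n) * \<phi> ^ n) + \<phi> ^ (r + 1) * (T oo \<phi>)"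
    by (simp only: fps_compose_add_distrib fps_compose_sum_distrib fps_compose_mult_distrib[OF \<phi>0]
        fps_X_power_compose[OF \<phi>0] fps_const_compose)
  finally have "H oo \<phi> = (\<Sum>n\<le>r. fps_const (H $ n) * \<phi> ^ n) + \<phi> ^ (r + 1) * (T oo \<phi>)" .
  moreover have "(\<phi> ^ (r + 1) * F * G) $ r = 0" for F
    unfolding \<phi>_def power_mult_distrib by (simp add: fps_X_power_mult_nth mult.assoc)
  ultimately have "((H oo \<phi>) * G) $ r = (\<Sum>n\<le>r. H $ n * (\<phi> ^ n * G) $ r)"
    by (simp add: distrib_right sum_distrib_right fps_sum_nth mult.assoc)
  also have "\<dots> = (\<Sum>n\<le>r. H $ n * of_bool (n = r))"
    using fps_nth_power_deriv_mult_inverse_power[OF u0]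
    by (intro sum.cong) (simp_all add: \<phi>_def G_def mult.assoc)
  also have "\<dots> = H $ r"
    by simp
  finally show ?thesis
    by (simp add: \<phi>_def G_def mult.assoc)
qed

lemma fps_X_mult_shift_exp:
  "fps_X * fps_shift 1 (fps_exp 1) = (fps_exp 1 - 1 :: 'a::field_char_0 fps)"
  by (rule fps_ext) (simp add: fps_X_mult_nth)

lemma fps_ln_compose_exp: "fps_ln 1 oo (fps_exp 1 - 1) = (fps_X :: 'a::field_char_0 fps)"
  using fps_inv_fps_exp_compose(1)[of "1::'a"] fps_ln_fps_exp_inv[of "1::'a"] by simp

lemma fps_shift_exp_mult_shift_ln_compose:
  "fps_shift 1 (fps_exp 1) * (fps_shift 1 (fps_ln 1) oo (fps_exp 1 - 1))
     = (1 :: 'a::field_char_0 fps)"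
proof -
  define E :: "'a fps" where "E = fps_shift 1 (fps_exp 1)"
  define L :: "'a fps" where "L = fps_shift 1 (fps_ln 1)"
  have \<phi>0: "(fps_exp 1 - 1 :: 'a fps) $ 0 = 0"
    by simp
  have "fps_X * L = fps_ln 1"
    unfolding L_def by (rule fps_ext) (simp add: fps_X_mult_nth)
  then have "(fps_exp 1 - 1) * (L oo (fps_exp 1 - 1)) = fps_X"
    by (metis fps_compose_mult_distrib[OF \<phi>0] fps_X_fps_compose_startby0[OF \<phi>0] fps_ln_compose_exp)
  then have "fps_X * (E * (L oo (fps_exp 1 - 1))) = fps_X * 1"
    unfolding E_def by (simp only: mult.assoc[symmetric] fps_X_mult_shift_exp mult_1_right)
  then show ?thesis
    by (simp add: E_def L_def)
qed

lemma fps_binomial_eq_exp_compose_ln: "fps_binomial v = fps_exp v oo fps_ln (1 :: 'a::field_char_0)"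
proof -
  have "fps_deriv (fps_exp v oo fps_ln 1)
      = fps_const v * (fps_exp v oo fps_ln (1 :: 'a)) / (1 + fps_X)"
    by (simp add: fps_compose_deriv fps_ln_deriv fps_divide_unit fps_const_mult_apply_left)
  then show ?thesis
    using fps_binomial_ODE_unique'[of "fps_exp v oo fps_ln 1" v] by simp
qed

lemma fps_binomial_compose_exp:
  "fps_binomial v oo (fps_exp 1 - 1) = fps_exp (v :: 'a::field_char_0)"
  by (simp add: fps_binomial_eq_exp_compose_ln fps_compose_assoc[symmetric] fps_ln_compose_exp)

definition denominator_fps :: "complex \<Rightarrow> complex fps" where
  "denominator_fps w = fps_const w * fps_shift 1 (fps_exp 1) - 1"

lemma denominator_fps_nth_0: "denominator_fps w $ 0 = w - 1"
  by (simp add: denominator_fps_def)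

lemma U_tilde_eq_fps_nth:
  assumes "w \<noteq> 1"
  shows "U_tilde r w v = - fact r * (fps_exp v * inverse (denominator_fps w) ^ (r + 1)) $ r"
proof -
  define A :: "complex fps" where "A = Abs_fps (\<lambda>j. if j = 0 then 0 else 1 / fact (j + 1))"
  define P where "P = fps_const (fact r) * inverse (denominator_fps w) ^ (r + 1)"
  have "fps_const (w - 1) - fps_const (- w) * A = denominator_fps w"
    by (rule fps_ext) (simp add: A_def denominator_fps_def algebra_simps)
  moreover have "(\<Sum>k=0..m. (- w) ^ k / (w - 1) ^ (r + k + 1) * (fact (r + k) / fact k) *
        demoivre (\<lambda>j. 1 / fact (j + 1)) m k)
      = fact r * inverse ((fps_const (w - 1) - fps_const (- w) * A) ^ (r + 1)) $ m" for m
    unfolding demoivre_def A_def[symmetric]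
    by (rule sum_scaled_fact_div_fact_power_nth) (use assms in \<open>simp_all add: A_def\<close>)
  ultimately have "(\<Sum>k=0..m. (- w) ^ k / (w - 1) ^ (r + k + 1) * (fact (r + k) / fact k) *
        demoivre (\<lambda>j. 1 / fact (j + 1)) m k) = P $ m" for m
    by (simp only: P_def fps_mult_left_const_nth fps_inverse_power)
  then have "U_tilde r w v = - (\<Sum>m=0..r. P $ m * fps_exp v $ (r - m))"
    by (simp add: U_tilde_def mult_ac)
  also have "\<dots> = - ((P * fps_exp v) $ r)"
    by (simp only: fps_mult_nth)
  also have "P * fps_exp v
      = fps_const (fact r) * (fps_exp v * inverse (denominator_fps w) ^ (r + 1))"
    by (simp only: P_def mult_ac)
  finally show ?thesis
    by (simp only: fps_mult_left_const_nth minus_mult_left)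
qed

lemma U_eq_fps_nth_binomial:
  assumes "w \<noteq> 1"
  shows "U r w v = (if r = 0 then 1 else 0)
    - w * fact r * (fps_binomial v * inverse (fps_const w - fps_shift 1 (fps_ln 1)) ^ (r + 1)) $ r"
proof -
  define A :: "complex fps" where "A = Abs_fps (\<lambda>j. if j = 0 then 0 else 1 / of_nat (j + 1))"
  define B where "B = fps_const (w - 1) - fps_const 1 * A"
  define Q where "Q = fps_const w - fps_shift 1 (fps_ln 1)"
  define P where "P = fps_const (w * fact r) * inverse B ^ (r + 1)"
  have "(\<Sum>k=0..m. w / (w - 1) ^ (r + k + 1) * (fact (r + k) / fact k) *
        demoivre (\<lambda>j. 1 / of_nat (j + 1)) m k) = P $ m" for m
  proof -
    have "(\<Sum>k=0..m. 1 ^ k / (w - 1) ^ (r + k + 1) * (fact (r + k) / fact k) * (A ^ k) $ m)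
        = fact r * inverse (B ^ (r + 1)) $ m"
      unfolding B_def
      by (rule sum_scaled_fact_div_fact_power_nth) (use assms in \<open>simp_all add: A_def\<close>)
    from arg_cong[OF this, of "(*) w"] show ?thesis
      unfolding demoivre_def A_def[symmetric] P_def fps_mult_left_const_nth fps_inverse_power
      by (simp add: sum_distrib_left mult_ac)
  qed
  then have "U r w v = (if r = 0 then 1 else 0)
      - (\<Sum>m=0..r. (P oo - fps_X) $ m * fps_binomial v $ (r - m))"
    by (simp add: U_def fps_compose_uminus' mult_ac)
  also have "\<dots> = (if r = 0 then 1 else 0) - ((P oo - fps_X) * fps_binomial v) $ r"
    by (simp only: fps_mult_nth)
  also have "P oo - fps_X = fps_const (w * fact r) * inverse Q ^ (r + 1)"
  proof -
    have "A oo - fps_X = fps_shift 1 (fps_ln 1) - 1"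
      by (rule fps_ext) (simp add: fps_compose_uminus' A_def fps_ln_nth power_minus_odd)
    then have "B oo - fps_X = Q"
      by (simp add: B_def Q_def fps_compose_sub_distrib fps_eq_iff)
    moreover have "B $ 0 \<noteq> 0"
      using assms by (simp add: B_def A_def)
    ultimately show ?thesis
      by (simp add: P_def fps_compose_mult_distrib fps_inverse_compose flip: fps_compose_power)
  qed
  also have "fps_const (w * fact r) * inverse Q ^ (r + 1) * fps_binomial v
      = fps_const (w * fact r) * (fps_binomial v * inverse Q ^ (r + 1))"
    by (simp only: mult_ac)
  finally show ?thesis
    unfolding Q_def by (simp only: fps_mult_left_const_nth mult.assoc)
qed

lemma fps_nth_binomial_mult_inverse_power:
  assumes "w \<noteq> 1"
  shows "(fps_binomial v * inverse (fps_const w - fps_shift 1 (fps_ln 1)) ^ (r + 1)) $ r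
       = (fps_exp v * fps_exp 1 * inverse (denominator_fps w) ^ (r + 1)) $ r"
proof -
  define L :: "complex fps" where "L = fps_shift 1 (fps_ln 1)"
  define H where "H = fps_binomial v * inverse (fps_const w - L) ^ (r + 1)"
  define u :: "complex fps" where "u = fps_shift 1 (fps_exp 1)"
  define \<phi> :: "complex fps" where "\<phi> = fps_exp 1 - 1"
  have \<phi>0: "\<phi> $ 0 = 0" and u0: "u $ 0 \<noteq> 0" and \<phi>_deriv: "fps_deriv \<phi> = fps_exp 1"
    by (simp_all add: \<phi>_def u_def)
  have Xu: "fps_X * u = \<phi>"
    unfolding u_def \<phi>_def by (rule fps_X_mult_shift_exp)
  have Q0: "(fps_const w - L) $ 0 \<noteq> 0"
    using assms by (simp add: L_def fps_ln_nth)
  have "fps_binomial v oo \<phi> = fps_exp v"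
    unfolding \<phi>_def by (rule fps_binomial_compose_exp)
  then have H_compose: "H oo \<phi> = fps_exp v * inverse (fps_const w - (L oo \<phi>)) ^ (r + 1)"
    by (simp only: H_def fps_compose_mult_distrib[OF \<phi>0] fps_const_compose fps_compose_sub_distrib
        fps_compose_power[OF \<phi>0, symmetric] fps_inverse_compose[OF \<phi>0 Q0])
  have inverse_eq: "inverse (fps_const w - (L oo \<phi>)) * inverse u = inverse (denominator_fps w)"
    using fps_shift_exp_mult_shift_ln_compose[where 'a = complex]
    by (simp add: denominator_fps_def L_def u_def \<phi>_def algebra_simps flip: fps_inverse_mult)
  have "(H oo \<phi>) * fps_deriv \<phi> * inverse u ^ (r + 1)
      = fps_exp v * fps_exp 1 * (inverse (fps_const w - (L oo \<phi>)) * inverse u) ^ (r + 1)"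
    unfolding H_compose \<phi>_deriv power_mult_distrib by (simp only: mult_ac)
  then show ?thesis
    using fps_nth_change_of_variables[OF u0, of H r]
    unfolding Xu inverse_eq by (simp only: H_def L_def)
qed

lemma U_eq_fps_nth:
  assumes "w \<noteq> 1"
  shows "U r w v = (if r = 0 then 1 else 0)
    - w * fact r * (fps_exp v * fps_exp 1 * inverse (denominator_fps w) ^ (r + 1)) $ r"
  unfolding U_eq_fps_nth_binomial[OF assms] fps_nth_binomial_mult_inverse_power[OF assms] ..

lemma exp_eq_one_plus_deriv_denominator_fps:
  "fps_const w * fps_exp 1 = 1 + fps_deriv (fps_X * denominator_fps w)"
proof -
  have "fps_X * denominator_fps w = fps_const w * (fps_exp 1 - 1) - fps_X"
    by (simp add: denominator_fps_def algebra_simps fps_X_mult_shift_exp[symmetric])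
  then have "fps_deriv (fps_X * denominator_fps w) = fps_const w * fps_exp 1 - 1"
    by simp
  then show ?thesis
    by simp
qed

lemma fps_nth_exp_mult_inverse_power_recurrence:
  fixes D e :: "'a::field_char_0 fps"
  assumes D0: "D $ 0 \<noteq> 0" and e_deriv: "fps_deriv e = fps_const c * e"
  shows "fact (s + 1) * (e * (1 + fps_deriv (fps_X * D)) * inverse D ^ (s + 2)) $ (s + 1)
       = fact (s + 1) * (e * inverse D ^ (s + 2)) $ (s + 1)
         + c * (fact s * (e * inverse D ^ (s + 1)) $ s)"
proof -
  define W where "W = inverse D"
  have DW: "D * W = 1"
    using D0 by (simp add: W_def inverse_mult_eq_1')
  have W_deriv: "fps_deriv W = - fps_deriv D * W ^ 2"
    unfolding W_def by (rule fps_inverse_deriv[OF D0])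
  have "e * (1 + fps_deriv (fps_X * D)) * W ^ (s + 2)
      = e * W ^ (s + 2) + (D * W) * (e * W ^ (s + 1)) + fps_X * (e * (fps_deriv D * W ^ 2) * W ^ s)"
    by (simp add: fps_deriv_mult algebra_simps power2_eq_square)
  also have "\<dots> = e * W ^ (s + 2) + e * W ^ (s + 1) - fps_X * (e * fps_deriv W * W ^ s)"
    by (simp add: DW W_deriv)
  finally have lhs: "(e * (1 + fps_deriv (fps_X * D)) * W ^ (s + 2)) $ (s + 1)
      = (e * W ^ (s + 2)) $ (s + 1) + (e * W ^ (s + 1)) $ (s + 1) - (e * fps_deriv W * W ^ s) $ s"
    by simp
  have "fps_deriv (e * W ^ (s + 1))
      = fps_const c * (e * W ^ (s + 1)) + fps_const (of_nat (s + 1)) * (e * fps_deriv W * W ^ s)"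
    unfolding fps_deriv_mult fps_deriv_power e_deriv by (simp add: algebra_simps)
  then have "of_nat (s + 1) * (e * W ^ (s + 1)) $ (s + 1)
      = c * (e * W ^ (s + 1)) $ s + of_nat (s + 1) * (e * fps_deriv W * W ^ s) $ s"
    by (metis fps_deriv_nth fps_add_nth fps_mult_left_const_nth)
  then have "fact s * (of_nat (s + 1) * ((e * W ^ (s + 1)) $ (s + 1) - (e * fps_deriv W * W ^ s) $ s))
      = c * (fact s * (e * W ^ (s + 1)) $ s)"
    by (simp only: right_diff_distrib eq_diff_eq) (simp only: ring_distribs mult_ac add_diff_cancel)
  moreover have "fact (s + 1) = (of_nat (s + 1) * fact s :: 'a)"
    by simp
  ultimately show ?thesis
    unfolding W_def[symmetric] lhs
    by (simp only: ring_distribs mult_ac) (simp only: add_diff_eq[symmetric])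
qed

theorem proposition6p4:
  fixes v w :: complex
  assumes "w \<noteq> 1"
  shows "U 0 w v = U_tilde 0 w v \<and>
         (\<forall>r::nat. r \<ge> 1 \<longrightarrow> U r w v = U_tilde r w v + v * U_tilde (r - 1) w v)"
proof (intro conjI allI impI)
  define D where "D = denominator_fps w"
  have D0: "D $ 0 \<noteq> 0"
    using assms by (simp add: D_def denominator_fps_nth_0)
  show "U 0 w v = U_tilde 0 w v"
    using assms by (simp add: U_eq_fps_nth U_tilde_eq_fps_nth denominator_fps_nth_0 field_simps)
  fix r :: nat
  assume "r \<ge> 1"
  then obtain s where r: "r = s + 1"
    by (metis add.commute le_add_diff_inverse)
  have "w * (fps_exp v * fps_exp 1 * inverse D ^ (s + 2)) $ (s + 1)
      = (fps_exp v * (1 + fps_deriv (fps_X * D)) * inverse D ^ (s + 2)) $ (s + 1)"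
    unfolding D_def exp_eq_one_plus_deriv_denominator_fps[symmetric]
    by (simp only: fps_mult_left_const_nth[symmetric] mult_ac)
  then have "U r w v
      = - (fact (s + 1) * (fps_exp v * (1 + fps_deriv (fps_X * D)) * inverse D ^ (s + 2)) $ (s + 1))"
    using U_eq_fps_nth[OF assms, of r v] by (simp add: r D_def mult_ac)
  also have "\<dots> = U_tilde r w v + v * U_tilde (r - 1) w v"
    using fps_nth_exp_mult_inverse_power_recurrence[OF D0 fps_exp_deriv, of s]
    by (simp add: r D_def U_tilde_eq_fps_nth[OF assms] algebra_simps)
  finally show "U r w v = U_tilde r w v + v * U_tilde (r - 1) w v" .
qed

end
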